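(* For all $\alpha,\beta\in\mathbb{R}$ and all $f\in C_0^\infty((0,\infty))$ (complex-valued), with $\mathbf C_{\alpha,\beta}=\frac{(\beta-3)(2\alpha-\beta+1)}{4}$, \[ \mathbf C_{\alpha,\beta}^2\left\|\frac{f}{r^2}\right\|_{L^2_\beta}^2\le\left\|\mathfrak L_\alpha f\right\|_{L^2_\beta}^2 . \]
   Context: For $\beta\in\mathbb{R}$, $L^2_\beta$ denotes the weighted space on $(0,\infty)$ with norm $\|g\|_{L^2_\beta}^2=\int_0^\infty |g(r)|^2 r^\beta\,dr$. For $\alpha\in\mathbb{R}$, $\mathfrak L_\alpha$ is the operator $\mathfrak L_\alpha f(r)=f''(r)+\frac{\alpha}{r}f'(r)$. Expressions such as $f/r^2$ denote the function $r\mapsto f(r)/r^2$. *)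

theory Defs
  imports "HOL-Analysis.Analysis"
begin

definition vderiv :: "nat \<Rightarrow> (real \<Rightarrow> complex) \<Rightarrow> real \<Rightarrow> complex" where
  "vderiv n f = ((\<lambda>g x. vector_derivative g (at x)) ^^ n) f"

definition C0_inf_pos :: "(real \<Rightarrow> complex) \<Rightarrow> bool" where
  "C0_inf_pos f \<longleftrightarrow>
     (\<forall>n. \<forall>r>0. (vderiv n f has_vector_derivative vderiv (Suc n) f r) (at r)) \<and>
     (\<exists>a b. 0 < a \<and> a < b \<and> (\<forall>r. r \<notin> {a..b} \<longrightarrow> f r = 0))"

definition L2w_sq :: "real \<Rightarrow> (real \<Rightarrow> complex) \<Rightarrow> real" where
  "L2w_sq \<beta> g = integral {0<..} (\<lambda>r. (cmod (g r))\<^sup>2 * r powr \<beta>)"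

definition Lop :: "real \<Rightarrow> (real \<Rightarrow> complex) \<Rightarrow> real \<Rightarrow> complex" where
  "Lop \<alpha> f r = vderiv 2 f r + (\<alpha> / r) *\<^sub>R vderiv 1 f r"

definition Cab :: "real \<Rightarrow> real \<Rightarrow> real" where
  "Cab \<alpha> \<beta> = (\<beta> - 3) * (2 * \<alpha> - \<beta> + 1) / 4"

end

theory Submission
  imports Defs
begin

text \<open>
  In the variable \<open>t = ln r\<close> write \<open>f = r\<^sup>a u\<close> with \<open>a = (3 - \<beta>) / 2\<close>. Then the weighted
  norms become unweighted \<open>L\<^sup>2(dt)\<close> norms: \<open>f / r\<^sup>2\<close> corresponds to \<open>u\<close> and \<open>L\<^sub>\<alpha> f\<close> to
  \<open>(D + a) (D + b) u\<close>, where \<open>D = d/dt\<close> and \<open>b = a + \<alpha> - 1\<close>; moreover \<open>Cab \<alpha> \<beta> = - a b\<close>.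
  Expanding the square and integrating the cross terms by parts gives
  \<open>\<parallel>(D + a) (D + b) u\<parallel>\<^sup>2 = \<parallel>D\<^sup>2 u\<parallel>\<^sup>2 + (a\<^sup>2 + b\<^sup>2) \<parallel>D u\<parallel>\<^sup>2 + (a b)\<^sup>2 \<parallel>u\<parallel>\<^sup>2\<close>.
\<close>

lemma Euler_sum_of_squares:
  fixes U V W :: "'a::real_inner" and c d :: real
  shows "(norm (W + c *\<^sub>R V + d *\<^sub>R U))\<^sup>2 - d\<^sup>2 * (norm U)\<^sup>2
           - (2 * c * (V \<bullet> W) + 2 * d * (V \<bullet> V) + 2 * d * (U \<bullet> W) + 2 * c * d * (U \<bullet> V))
         = (norm W)\<^sup>2 + (c\<^sup>2 - 2 * d) * (norm V)\<^sup>2"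
proof -
  have "W \<bullet> V = V \<bullet> W" "W \<bullet> U = U \<bullet> W" "V \<bullet> U = U \<bullet> V"
    by (simp_all add: inner_commute)
  then show ?thesis
    unfolding power2_norm_eq_inner
    by (simp add: algebra_simps power2_eq_square)
qed

lemma integral_Ioi_eq_interval:
  fixes h :: "real \<Rightarrow> 'a::banach"
  assumes "0 < A" and "\<And>r. 0 < r \<Longrightarrow> r \<notin> {A..B} \<Longrightarrow> h r = 0"
  shows "integral {0<..} h = integral {A..B} h"
proof -
  have "(\<lambda>r. if r \<in> {0<..} then h r else 0) = (\<lambda>r. if r \<in> {A..B} then h r else 0)"
    using assms by (auto simp: fun_eq_iff)
  then show ?thesis by (metis integral_restrict_UNIV)
qed

lemma has_vector_derivative_locally_zero:
  assumes "(g has_vector_derivative g') (at r)" "open S" "r \<in> S" "\<And>y. y \<in> S \<Longrightarrow> g y = 0"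
  shows "g' = 0"
proof -
  have "((\<lambda>_. 0) has_vector_derivative g') (at r)"
    using has_vector_derivative_transform_within_open[OF assms(1-3)] assms(4) by simp
  then show ?thesis
    using vector_derivative_unique_at has_vector_derivative_const by blast
qed

lemma continuous_on_vector_derivative_at:
  assumes "\<And>x. x \<in> S \<Longrightarrow> (f has_vector_derivative f' x) (at x)"
  shows "continuous_on S f"
  using assms by (metis continuous_on_vector_derivative has_vector_derivative_at_within)

lemma powr_eq_power_mult_powr:
  fixes r \<beta> :: real
  assumes "0 < r"
  shows "r powr \<beta> = r ^ n * r powr (\<beta> - n)"
  using assms by (simp add: powr_realpow[symmetric] flip: powr_add)

text \<open>In \<open>t = ln r\<close> the hypotheses say \<open>U\<^sub>t = V\<close> and \<open>V\<^sub>t = W\<close>.\<close>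

lemma Euler_cross_terms_integral:
  fixes U V W :: "real \<Rightarrow> 'a::real_inner" and c d A B :: real
  assumes "0 < A" "A \<le> B"
    and U': "\<And>r. r \<in> {A..B} \<Longrightarrow> (U has_vector_derivative V r /\<^sub>R r) (at r)"
    and V': "\<And>r. r \<in> {A..B} \<Longrightarrow> (V has_vector_derivative W r /\<^sub>R r) (at r)"
    and boundary: "U A = 0" "V A = 0" "U B = 0" "V B = 0"
  shows "((\<lambda>r. (2 * c * (V r \<bullet> W r) + 2 * d * (V r \<bullet> V r) + 2 * d * (U r \<bullet> W r)
                + 2 * c * d * (U r \<bullet> V r)) / r) has_integral 0) {A..B}"
proof -
  define \<Psi> where "\<Psi> r = c * (V r \<bullet> V r) + 2 * d * (U r \<bullet> V r) + c * d * (U r \<bullet> U r)" for r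
  have d\<Psi>: "(\<Psi> has_vector_derivative (2 * c * (V r \<bullet> W r) + 2 * d * (V r \<bullet> V r) + 2 * d * (U r \<bullet> W r)
                + 2 * c * d * (U r \<bullet> V r)) / r) (at r)" if "r \<in> {A..B}" for r
  proof -
    note inner_deriv = bounded_bilinear.has_vector_derivative[OF bounded_bilinear_inner]
    have "(\<Psi> has_vector_derivative
            c * (V r \<bullet> (W r /\<^sub>R r) + (W r /\<^sub>R r) \<bullet> V r)
          + 2 * d * (U r \<bullet> (W r /\<^sub>R r) + (V r /\<^sub>R r) \<bullet> V r)
          + c * d * (U r \<bullet> (V r /\<^sub>R r) + (V r /\<^sub>R r) \<bullet> U r)) (at r)"
      unfolding \<Psi>_def[abs_def]
      using inner_deriv[OF V'[OF that] V'[OF that]] inner_deriv[OF U'[OF that] V'[OF that]]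
        inner_deriv[OF U'[OF that] U'[OF that]]
      by (intro derivative_intros) (auto simp: has_real_derivative_iff_has_vector_derivative)
    then show ?thesis
      by (rule has_vector_derivative_eq_rhs)
        (use that \<open>0 < A\<close> in \<open>simp add: inner_commute field_simps\<close>)
  qed
  have "((\<lambda>r. (2 * c * (V r \<bullet> W r) + 2 * d * (V r \<bullet> V r) + 2 * d * (U r \<bullet> W r)
                + 2 * c * d * (U r \<bullet> V r)) / r) has_integral \<Psi> B - \<Psi> A) {A..B}"
    by (rule fundamental_theorem_of_calculus[OF \<open>A \<le> B\<close>])
      (rule has_vector_derivative_at_within[OF d\<Psi>])
  then show ?thesis
    by (simp add: \<Psi>_def boundary)
qed

lemma Euler_operator_integral_lower_bound:
  fixes U V W :: "real \<Rightarrow> 'a::real_inner" and c d A B :: real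
  assumes "0 < A" "A \<le> B" "2 * d \<le> c\<^sup>2"
    and U': "\<And>r. r \<in> {A..B} \<Longrightarrow> (U has_vector_derivative V r /\<^sub>R r) (at r)"
    and V': "\<And>r. r \<in> {A..B} \<Longrightarrow> (V has_vector_derivative W r /\<^sub>R r) (at r)"
    and cont_W: "continuous_on {A..B} W"
    and boundary: "U A = 0" "V A = 0" "U B = 0" "V B = 0"
  shows "d\<^sup>2 * integral {A..B} (\<lambda>r. (norm (U r))\<^sup>2 / r)
           \<le> integral {A..B} (\<lambda>r. (norm (W r + c *\<^sub>R V r + d *\<^sub>R U r))\<^sup>2 / r)"
proof -
  define R where "R r = ((norm (W r))\<^sup>2 + (c\<^sup>2 - 2 * d) * (norm (V r))\<^sup>2) / r" for r
  note cross = Euler_cross_terms_integral[OF \<open>0 < A\<close> \<open>A \<le> B\<close> U' V' boundary, of c d]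
  have pos: "0 < r" if "r \<in> {A..B}" for r
    using that \<open>0 < A\<close> by simp
  have int_U: "(\<lambda>r. (norm (U r))\<^sup>2 / r) integrable_on {A..B}"
    using pos continuous_on_vector_derivative_at[OF U']
    by (intro integrable_continuous_interval continuous_intros) fastforce+
  have int_R: "R integrable_on {A..B}"
    unfolding R_def using pos continuous_on_vector_derivative_at[OF V']
    by (intro integrable_continuous_interval continuous_intros cont_W) fastforce+
  have "0 \<le> integral {A..B} R"
    using int_R pos \<open>2 * d \<le> c\<^sup>2\<close>
    by (intro integral_nonneg) (auto simp: R_def intro!: divide_nonneg_pos add_nonneg_nonneg)
  have "(norm (W r + c *\<^sub>R V r + d *\<^sub>R U r))\<^sup>2 / r = d\<^sup>2 * ((norm (U r))\<^sup>2 / r)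
      + (2 * c * (V r \<bullet> W r) + 2 * d * (V r \<bullet> V r) + 2 * d * (U r \<bullet> W r) + 2 * c * d * (U r \<bullet> V r)) / r
      + R r" if "r \<in> {A..B}" for r
  proof -
    have "(norm (W r + c *\<^sub>R V r + d *\<^sub>R U r))\<^sup>2 = d\<^sup>2 * (norm (U r))\<^sup>2
        + (2 * c * (V r \<bullet> W r) + 2 * d * (V r \<bullet> V r) + 2 * d * (U r \<bullet> W r) + 2 * c * d * (U r \<bullet> V r))
        + r * R r"
      using Euler_sum_of_squares[of "W r" c "V r" d "U r"] pos[OF that] by (simp add: R_def)
    then show ?thesis
      using pos[OF that] by (simp add: add_divide_distrib)
  qed
  then have "((\<lambda>r. (norm (W r + c *\<^sub>R V r + d *\<^sub>R U r))\<^sup>2 / r) has_integral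
          d\<^sup>2 * integral {A..B} (\<lambda>r. (norm (U r))\<^sup>2 / r) + 0 + integral {A..B} R) {A..B}"
    by (intro has_integral_eq[OF _ has_integral_add[OF has_integral_add[OF
          has_integral_mult_right[OF integrable_integral[OF int_U]] cross] integrable_integral[OF int_R]]])
      simp
  with \<open>0 \<le> integral {A..B} R\<close> show ?thesis
    by (simp add: integral_unique)
qed

lemma has_vector_derivative_powr_scaleR:
  fixes y :: "real \<Rightarrow> 'a::real_normed_vector"
  assumes "0 < r" and "(y has_vector_derivative y') (at r)"
  shows "((\<lambda>s. s powr (-a) *\<^sub>R y s) has_vector_derivative
           (r powr (-a) *\<^sub>R (r *\<^sub>R y' - a *\<^sub>R y r)) /\<^sub>R r) (at r)"
proof -
  have "((\<lambda>s. s powr (-a)) has_real_derivative - a * r powr (-a) / r) (at r)"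
    using has_real_derivative_powr[OF assms(1), of "-a"] assms(1) by (simp add: powr_diff)
  from has_vector_derivative_scaleR[OF this assms(2)] show ?thesis
    by (rule has_vector_derivative_eq_rhs) (use assms(1) in \<open>simp add: algebra_simps divide_inverse\<close>)
qed

text \<open>With \<open>D = r d/dr\<close> the left-hand side is \<open>((D - a)\<^sup>2 + (a + b) (D - a) + a b) x\<close>, which
  factors as \<open>D (D + b - a) x\<close>.\<close>

lemma Euler_operator_conjugation:
  fixes x x' x'' :: "'a::real_vector" and a b r :: real
  shows "(r *\<^sub>R (x' + r *\<^sub>R x'' - a *\<^sub>R x') - a *\<^sub>R (r *\<^sub>R x' - a *\<^sub>R x))
           + (a + b) *\<^sub>R (r *\<^sub>R x' - a *\<^sub>R x) + (a * b) *\<^sub>R x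
         = r\<^sup>2 *\<^sub>R x'' + ((b - a + 1) * r) *\<^sub>R x'"
  by (simp add: algebra_simps power2_eq_square)

lemma norm_powr_scaleR_sq_div:
  fixes y :: "'a::real_normed_vector"
  assumes "0 < r" and "\<beta> = 3 - 2 * a"
  shows "(norm (r powr (-a) *\<^sub>R y))\<^sup>2 / r = (norm (y /\<^sub>R r\<^sup>2))\<^sup>2 * r powr \<beta>"
proof -
  have "(norm (r powr (-a) *\<^sub>R y))\<^sup>2 / r = (norm y)\<^sup>2 * (r powr (-a) * r powr (-a) / r powr 1)"
    using assms by (simp add: power_mult_distrib power2_eq_square)
  also have "\<dots> = (norm y)\<^sup>2 * r powr (-a + -a - 1)"
    by (simp only: powr_add powr_diff)
  also have "-a + -a - 1 = \<beta> - 4"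
    using assms(2) by simp
  also have "(norm y)\<^sup>2 * r powr (\<beta> - 4) = (norm (y /\<^sub>R r\<^sup>2))\<^sup>2 * r powr \<beta>"
    using assms(1)
    by (simp add: powr_eq_power_mult_powr[of _ \<beta> 4] power_mult_distrib power_inverse flip: power_mult)
  finally show ?thesis .
qed

lemma weighted_Rellich_on_interval:
  fixes x x' x'' :: "real \<Rightarrow> 'a::real_inner" and \<alpha> \<beta> A B :: real
  assumes "0 < A" "A \<le> B"
    and x': "\<And>r. r \<in> {A..B} \<Longrightarrow> (x has_vector_derivative x' r) (at r)"
    and x'': "\<And>r. r \<in> {A..B} \<Longrightarrow> (x' has_vector_derivative x'' r) (at r)"
    and cont: "continuous_on {A..B} x''"
    and boundary: "x A = 0" "x' A = 0" "x B = 0" "x' B = 0"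
  shows "(Cab \<alpha> \<beta>)\<^sup>2 * integral {A..B} (\<lambda>r. (norm (x r /\<^sub>R r\<^sup>2))\<^sup>2 * r powr \<beta>)
           \<le> integral {A..B} (\<lambda>r. (norm (x'' r + (\<alpha> / r) *\<^sub>R x' r))\<^sup>2 * r powr \<beta>)"
proof -
  define a where "a = (3 - \<beta>) / 2"
  define b where "b = a + \<alpha> - 1"
  define U where "U r = r powr (-a) *\<^sub>R x r" for r
  define V where "V r = r powr (-a) *\<^sub>R (r *\<^sub>R x' r - a *\<^sub>R x r)" for r
  define W where "W r = r powr (-a) *\<^sub>R (r *\<^sub>R (x' r + r *\<^sub>R x'' r - a *\<^sub>R x' r) - a *\<^sub>R (r *\<^sub>R x' r - a *\<^sub>R x r))"
    for r
  have pos: "0 < r" if "r \<in> {A..B}" for r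
    using that \<open>0 < A\<close> by simp
  have U': "(U has_vector_derivative V r /\<^sub>R r) (at r)" if "r \<in> {A..B}" for r
    unfolding U_def[abs_def] V_def by (rule has_vector_derivative_powr_scaleR[OF pos x']) fact+
  have V': "(V has_vector_derivative W r /\<^sub>R r) (at r)" if "r \<in> {A..B}" for r
  proof -
    have "((\<lambda>s. s *\<^sub>R x' s - a *\<^sub>R x s) has_vector_derivative x' r + r *\<^sub>R x'' r - a *\<^sub>R x' r) (at r)"
      by (rule has_vector_derivative_eq_rhs[OF has_vector_derivative_diff[OF
            has_vector_derivative_scaleR[OF DERIV_ident x''[OF that]]
            has_vector_derivative_scaleR[OF DERIV_const x'[OF that]]]]) simp
    then show ?thesis
      unfolding V_def[abs_def] W_def by (rule has_vector_derivative_powr_scaleR[OF pos[OF that]])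
  qed
  have cont_W: "continuous_on {A..B} W"
    using pos continuous_on_vector_derivative_at[OF x'] continuous_on_vector_derivative_at[OF x'']
    unfolding W_def by (intro continuous_intros cont) fastforce+
  have \<beta>: "\<beta> = 3 - 2 * a"
    by (simp add: a_def field_simps)
  have "2 * (a * b) \<le> (a + b)\<^sup>2"
    by (simp add: power2_sum)
  then have "(a * b)\<^sup>2 * integral {A..B} (\<lambda>r. (norm (U r))\<^sup>2 / r)
      \<le> integral {A..B} (\<lambda>r. (norm (W r + (a + b) *\<^sub>R V r + (a * b) *\<^sub>R U r))\<^sup>2 / r)"
    using Euler_operator_integral_lower_bound[OF \<open>0 < A\<close> \<open>A \<le> B\<close> _ U' V' cont_W]
    by (simp add: U_def V_def boundary)
  moreover have "Cab \<alpha> \<beta> = - (a * b)"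
    by (simp add: Cab_def a_def b_def field_simps)
  moreover have "integral {A..B} (\<lambda>r. (norm (U r))\<^sup>2 / r)
      = integral {A..B} (\<lambda>r. (norm (x r /\<^sub>R r\<^sup>2))\<^sup>2 * r powr \<beta>)"
    unfolding U_def using pos \<beta> by (intro integral_cong norm_powr_scaleR_sq_div) auto
  moreover have "integral {A..B} (\<lambda>r. (norm (W r + (a + b) *\<^sub>R V r + (a * b) *\<^sub>R U r))\<^sup>2 / r)
      = integral {A..B} (\<lambda>r. (norm (x'' r + (\<alpha> / r) *\<^sub>R x' r))\<^sup>2 * r powr \<beta>)"
  proof (rule integral_cong)
    fix r assume "r \<in> {A..B}"
    then have "0 < r" by (rule pos)
    have "W r + (a + b) *\<^sub>R V r + (a * b) *\<^sub>R U r = r powr (-a) *\<^sub>R (r\<^sup>2 *\<^sub>R x'' r + (\<alpha> * r) *\<^sub>R x' r)"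
      unfolding W_def V_def U_def scaleR_left_commute[of "a + b"] scaleR_left_commute[of "a * b"]
      by (simp only: Euler_operator_conjugation flip: scaleR_add_right) (simp add: b_def)
    also have "\<dots> = r powr (-a) *\<^sub>R (r\<^sup>2 *\<^sub>R (x'' r + (\<alpha> / r) *\<^sub>R x' r))"
      using \<open>0 < r\<close> by (simp add: scaleR_add_right power2_eq_square)
    finally show "(norm (W r + (a + b) *\<^sub>R V r + (a * b) *\<^sub>R U r))\<^sup>2 / r
        = (norm (x'' r + (\<alpha> / r) *\<^sub>R x' r))\<^sup>2 * r powr \<beta>"
      using \<open>0 < r\<close> by (simp only: norm_powr_scaleR_sq_div[OF \<open>0 < r\<close> \<beta>]) simp
  qed
  ultimately show ?thesis
    by simp
qed

lemma L2w_sq_eq_interval: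
  assumes "0 < A" and "\<And>r. 0 < r \<Longrightarrow> r \<notin> {A..B} \<Longrightarrow> g r = 0"
  shows "L2w_sq \<beta> g = integral {A..B} (\<lambda>r. (norm (g r))\<^sup>2 * r powr \<beta>)"
  unfolding L2w_sq_def using assms by (intro integral_Ioi_eq_interval) auto

lemma vderiv_0 [simp]: "vderiv 0 f = f"
  by (simp add: vderiv_def)

lemma C0_inf_pos_has_vector_derivative:
  assumes "C0_inf_pos f" and "0 < r"
  shows "(vderiv n f has_vector_derivative vderiv (Suc n) f r) (at r)"
  using assms unfolding C0_inf_pos_def by blast

lemma C0_inf_pos_vderiv_vanish:
  assumes "C0_inf_pos f"
  obtains A B where "0 < A" "A < B" "\<And>n r. 0 < r \<Longrightarrow> r \<notin> {A<..<B} \<Longrightarrow> vderiv n f r = 0"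
proof -
  obtain a b where "0 < a" "a < b" and supp: "\<And>r. r \<notin> {a..b} \<Longrightarrow> f r = 0"
    using assms unfolding C0_inf_pos_def by blast
  define S where "S = {0<..} - {a..b}"
  have "open S"
    by (simp add: S_def open_Diff)
  have "vderiv n f r = 0" if "r \<in> S" for n r
    using that
  proof (induction n arbitrary: r)
    case 0
    then show ?case
      by (simp add: supp S_def)
  next
    case (Suc n)
    then show ?case
      by (intro has_vector_derivative_locally_zero[OF C0_inf_pos_has_vector_derivative[OF assms]
            \<open>open S\<close>]) (auto simp: S_def)
  qed
  then show ?thesis
    using \<open>0 < a\<close> \<open>a < b\<close> by (intro that[of "a / 2" "2 * b"]) (auto simp: S_def)
qed

theorem theorem1p3:
  fixes \<alpha> \<beta> :: real and f :: "real \<Rightarrow> complex"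
  assumes "C0_inf_pos f"
  shows "(Cab \<alpha> \<beta>)\<^sup>2 * L2w_sq \<beta> (\<lambda>r. f r / of_real (r\<^sup>2)) \<le> L2w_sq \<beta> (Lop \<alpha> f)"
proof -
  obtain A B where "0 < A" "A < B"
    and vanish: "\<And>n r. 0 < r \<Longrightarrow> r \<notin> {A<..<B} \<Longrightarrow> vderiv n f r = 0"
    using C0_inf_pos_vderiv_vanish[OF assms] by blast
  have deriv: "(vderiv n f has_vector_derivative vderiv (Suc n) f r) (at r)" if "r \<in> {A..B}" for n r
    using C0_inf_pos_has_vector_derivative[OF assms] that \<open>0 < A\<close> by simp
  have main: "(Cab \<alpha> \<beta>)\<^sup>2 * integral {A..B} (\<lambda>r. (norm (f r /\<^sub>R r\<^sup>2))\<^sup>2 * r powr \<beta>)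
      \<le> integral {A..B} (\<lambda>r. (norm (vderiv 2 f r + (\<alpha> / r) *\<^sub>R vderiv 1 f r))\<^sup>2 * r powr \<beta>)"
    using \<open>0 < A\<close> \<open>A < B\<close> deriv[where n = 0] deriv[where n = 1]
      vanish[of A] vanish[of B] vanish[of A 0] vanish[of B 0]
    by (intro weighted_Rellich_on_interval continuous_on_vector_derivative_at[OF deriv[where n = 2]])
      (simp_all add: numeral_2_eq_2)
  have outside: "vderiv n f r = 0" if "0 < r" "r \<notin> {A..B}" for n r
    using vanish that by auto
  have f_div: "(\<lambda>r. f r / of_real (r\<^sup>2)) = (\<lambda>r. f r /\<^sub>R r\<^sup>2)"
    by (simp add: fun_eq_iff scaleR_conv_of_real divide_inverse mult.commute)
  show ?thesis
    unfolding Lop_def[abs_def] f_div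
    by (subst (1 2) L2w_sq_eq_interval[where A = A and B = B, OF \<open>0 < A\<close>])
      (use main outside[where n = 0] outside[where n = 1] outside[where n = 2] in auto)
qed

end
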